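(* $\mathsf{LPO}'\equiv_{sW}\mathsf{NEG}$, where $\mathsf{NEG}:\mathcal A_-(2^\mathbb N)\to\{0,1\}$ is given by $\mathsf{NEG}(A)=1$ if $\mu(A)=0$ and $\mathsf{NEG}(A)=0$ otherwise ($\mu$ the uniform measure on $2^\mathbb N$).
   Context: A problem $f:\subseteq X\rightrightarrows Y$ between represented spaces is a partial multi-valued map; $F\vdash f$ means $\delta_YF(p)\in f(\delta_X(p))$ whenever $\delta_X(p)\in\mathrm{dom}(f)$; $f\le_{sW}g$ iff there are computable $H,K$ with $HGK\vdash f$ for all $G\vdash g$, $\equiv_{sW}$ the induced equivalence. $\{0,1\}$ is represented by $p\mapsto p(0)$. $\mathsf{LPO}:\mathbb N^\mathbb N\to\{0,1\}$, $\mathsf{LPO}(p)=0\iff\exists n\;p(n)=0$. $\lim:\subseteq\mathbb{N}^\mathbb{N}\to\mathbb{N}^\mathbb{N}$ maps $\langle p_0,p_1,\dots\rangle$ to $\lim_np_n$; the jump $\mathsf{LPO}'$ is $\mathsf{LPO}$ with input representation $\lim$ (i.e. input $p$ is given via a sequence converging to it). $\mathcal A_-(2^\mathbb N)$ is the space of closed subsets of Cantor space represented by $p\mapsto2^\mathbb N\setminus\bigcup_nB_{p(n)}$ for a standard enumeration $(B_n)$ of basic open balls. *)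

theory Defs
  imports "HOL-Probability.Probability" "HOL-Library.Nat_Bijection"
begin

inductive PR :: "nat \<Rightarrow> (nat list \<Rightarrow> nat) \<Rightarrow> bool" where
  PR_zero: "PR n (\<lambda>_. 0)"
| PR_succ: "PR 1 (\<lambda>xs. Suc (xs ! 0))"
| PR_proj: "i < n \<Longrightarrow> PR n (\<lambda>xs. xs ! i)"
| PR_comp: "PR m g \<Longrightarrow> length fs = m \<Longrightarrow> (\<forall>f\<in>set fs. PR n f) \<Longrightarrow>
            PR n (\<lambda>xs. g (map (\<lambda>f. f xs) fs))"
| PR_rec: "PR n g \<Longrightarrow> PR (n + 2) h \<Longrightarrow>
           PR (Suc n) (\<lambda>xs. rec_nat (g (tl xs)) (\<lambda>k acc. h (k # acc # tl xs)) (hd xs))"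

definition prim_rec1 :: "(nat \<Rightarrow> nat) \<Rightarrow> bool" where
  "prim_rec1 f \<longleftrightarrow> (\<exists>h. PR 1 h \<and> (\<forall>x. f x = h [x]))"

type_synonym baire = "nat \<Rightarrow> nat"
type_synonym 'a rep = "baire \<Rightarrow> 'a option"
type_synonym ('a, 'b) problem = "'a \<Rightarrow> 'b set"     \<comment> \<open>partial multi-valued map\<close>

text \<open>A partial F on Baire space is computable iff some type-2 machine computes F(p) for every
 p in dom F.  Equivalent characterisation: there is a primitive recursive g such that for p in
 dom F and every n, g(<n, code(p|k)>) is nonzero for some k, and every nonzero value equals
 F(p)(n)+1 (g simulates the machine for k steps on the prefix p|k).\<close>
definition computable_baire :: "(baire \<Rightarrow> baire option) \<Rightarrow> bool" where
  "computable_baire F \<longleftrightarrow> (\<exists>g. prim_rec1 g \<and>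
     (\<forall>p q. F p = Some q \<longrightarrow> (\<forall>n.
        (\<exists>k. g (prod_encode (n, list_encode (map p [0..<k]))) \<noteq> 0) \<and>
        (\<forall>k. g (prod_encode (n, list_encode (map p [0..<k]))) \<noteq> 0 \<longrightarrow>
             g (prod_encode (n, list_encode (map p [0..<k]))) = Suc (q n)))))"

definition pdom :: "('a, 'b) problem \<Rightarrow> 'a set" where
  "pdom f = {x. f x \<noteq> {}}"

definition realizes :: "'a rep \<Rightarrow> 'b rep \<Rightarrow> (baire \<Rightarrow> baire option) \<Rightarrow> ('a, 'b) problem \<Rightarrow> bool" where
  "realizes dX dY F f \<longleftrightarrow>
     (\<forall>p x. dX p = Some x \<longrightarrow> x \<in> pdom f \<longrightarrow> (\<exists>q y. F p = Some q \<and> dY q = Some y \<and> y \<in> f x))"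

definition sW_le :: "'a rep \<Rightarrow> ('a, 'b) problem \<Rightarrow> 'b rep \<Rightarrow> 'c rep \<Rightarrow> ('c, 'd) problem \<Rightarrow> 'd rep \<Rightarrow> bool" where
  "sW_le dX f dY dU g dV \<longleftrightarrow>
     (\<exists>H K. computable_baire H \<and> computable_baire K \<and>
        (\<forall>G. realizes dU dV G g \<longrightarrow>
             realizes dX dY (\<lambda>p. Option.bind (K p) (\<lambda>r. Option.bind (G r) H)) f))"

definition sW_eq :: "'a rep \<Rightarrow> ('a, 'b) problem \<Rightarrow> 'b rep \<Rightarrow> 'c rep \<Rightarrow> ('c, 'd) problem \<Rightarrow> 'd rep \<Rightarrow> bool" where
  "sW_eq dX f dY dU g dV \<longleftrightarrow> sW_le dX f dY dU g dV \<and> sW_le dU g dV dX f dY"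

definition delta_01 :: "nat rep" where
  "delta_01 p = (if p 0 \<le> 1 then Some (p 0) else None)"

text \<open>lim: <p0,p1,...> (with <p0,p1,...><i,j> = p_i(j)) \<mapsto> lim p_i in Baire space.\<close>
definition lim_conv :: "baire \<Rightarrow> baire \<Rightarrow> bool" where
  "lim_conv p q \<longleftrightarrow> (\<forall>j. \<exists>N. \<forall>i\<ge>N. p (prod_encode (i, j)) = q j)"

definition delta_lim :: "baire rep" where
  "delta_lim p = (if \<exists>q. lim_conv p q then Some (THE q. lim_conv p q) else None)"

definition LPO :: "(baire, nat) problem" where
  "LPO p = {if \<exists>n. p n = 0 then 0 else 1}"

type_synonym cantor = "nat \<Rightarrow> bool"

definition binword :: "nat \<Rightarrow> bool list" where
  "binword n = map odd (list_decode n)"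

definition Bball :: "nat \<Rightarrow> cantor set" where
  "Bball n = (case n of 0 \<Rightarrow> {}
     | Suc m \<Rightarrow> {x. map x [0..<length (binword m)] = binword m})"

definition delta_closed :: "cantor set rep" where
  "delta_closed p = Some (UNIV - (\<Union>n. Bball (p n)))"

definition cantor_measure :: "cantor measure" where
  "cantor_measure = PiM UNIV (\<lambda>_::nat. measure_pmf (bernoulli_pmf (1/2)))"

definition NEG :: "(cantor set, nat) problem" where
  "NEG A = {if emeasure cantor_measure A = 0 then 1 else 0}"

end

theory Submission
  imports Defs
begin

(* For LPO' \<le> NEG, give every pair k = <m, s> the cylinder of sequences whose first 1 is at
   position k, and remove it as soon as some approximation p_i with i \<ge> s has p_i(m) \<noteq> 0.
   These cylinders are disjoint, each has positive measure, and together they cover Cantor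
   space up to the null sequence 0^\<omega>; so the remaining closed set is null iff no pair survives,
   i.e. iff lim p has no zero.
   For NEG \<le> LPO', the measures of the finite stages U_i of the enumerated open set U are
   computable dyadic rationals increasing to \<mu>(U); the bit [\<mu>(U_i) > 1 - 2^-j] converges in i
   to [\<mu>(U) > 1 - 2^-j], and this limit sequence has a zero iff \<mu>(U) < 1, i.e. iff the
   complement of U is not null.
   Both reductions use the identity as outer functional; the inner ones are computable because
   their values are read off finite prefixes of the input by primitive recursive step
   functions. *)

section \<open>Primitive recursive expressions\<close>

definition pr_expr :: "nat \<Rightarrow> ((nat \<Rightarrow> nat) \<Rightarrow> nat) \<Rightarrow> bool" where
  "pr_expr n F \<longleftrightarrow> (\<exists>f. PR n f \<and> (\<forall>\<sigma>. f (map \<sigma> [0..<n]) = F \<sigma>))"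

definition pr_pred :: "nat \<Rightarrow> ((nat \<Rightarrow> nat) \<Rightarrow> bool) \<Rightarrow> bool" where
  "pr_pred n P \<longleftrightarrow> pr_expr n (\<lambda>\<sigma>. if P \<sigma> then 1 else 0)"

lemma pr_expr_cong:
  "pr_expr n F \<Longrightarrow> (\<And>\<sigma>. F \<sigma> = G \<sigma>) \<Longrightarrow> pr_expr n G"
  unfolding pr_expr_def by (metis (no_types))

lemma pr_expr_var: "i < n \<Longrightarrow> pr_expr n (\<lambda>\<sigma>. \<sigma> i)"
  unfolding pr_expr_def by (rule exI[of _ "\<lambda>xs. xs ! i"]) (simp add: PR_proj)

lemma pr_expr_zero: "pr_expr n (\<lambda>\<sigma>. 0)"
  unfolding pr_expr_def by (rule exI[of _ "\<lambda>xs. 0"]) (simp add: PR_zero)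

lemma pr_expr_Suc_var: "pr_expr 1 (\<lambda>\<sigma>. Suc (\<sigma> 0))"
  unfolding pr_expr_def using PR_succ by (intro exI[of _ "\<lambda>xs. Suc (xs ! 0)"]) simp

lemma pr_expr_comp:
  assumes G: "pr_expr m G" and fs: "\<And>i. i < m \<Longrightarrow> pr_expr n (fs i)"
  shows "pr_expr n (\<lambda>\<sigma>. G (\<lambda>i. fs i \<sigma>))"
proof -
  obtain g where g: "PR m g" "\<And>\<tau>. g (map \<tau> [0..<m]) = G \<tau>"
    using G unfolding pr_expr_def by blast
  have "\<forall>i\<in>{..<m}. \<exists>f. PR n f \<and> (\<forall>\<sigma>. f (map \<sigma> [0..<n]) = fs i \<sigma>)"
    using fs unfolding pr_expr_def by blast
  then obtain ff where ff: "\<And>i. i < m \<Longrightarrow> PR n (ff i) \<and> (\<forall>\<sigma>. ff i (map \<sigma> [0..<n]) = fs i \<sigma>)"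
    by (metis lessThan_iff)
  have "PR n (\<lambda>xs. g (map (\<lambda>f. f xs) (map ff [0..<m])))"
    by (rule PR_comp[OF g(1)]) (auto simp: ff)
  moreover have "g (map (\<lambda>f. f (map \<sigma> [0..<n])) (map ff [0..<m])) = G (\<lambda>i. fs i \<sigma>)" for \<sigma>
  proof -
    have "map (\<lambda>f. f (map \<sigma> [0..<n])) (map ff [0..<m]) = map (\<lambda>i. fs i \<sigma>) [0..<m]"
      by (auto simp: ff)
    then show ?thesis by (simp only: g(2))
  qed
  ultimately show ?thesis unfolding pr_expr_def by (intro exI conjI allI)
qed

lemma pr_expr_comp2:
  assumes "pr_expr 2 (\<lambda>\<sigma>. F (\<sigma> 0) (\<sigma> 1))" "pr_expr n f" "pr_expr n g"
  shows "pr_expr n (\<lambda>\<sigma>. F (f \<sigma>) (g \<sigma>))"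
  using pr_expr_comp[where fs = "\<lambda>i. if i = 0 then f else g", OF assms(1)] assms(2,3) by simp

lemma pr_expr_reindex:
  assumes "pr_expr m F" "\<And>i. i < m \<Longrightarrow> r i < n"
  shows "pr_expr n (\<lambda>\<sigma>. F (\<lambda>i. \<sigma> (r i)))"
  by (rule pr_expr_comp[OF assms(1), of n "\<lambda>i \<sigma>. \<sigma> (r i)", simplified])
    (rule pr_expr_var, rule assms(2))

lemma pr_expr_shift:
  "pr_expr n f \<Longrightarrow> pr_expr (Suc n) (\<lambda>\<sigma>. f (\<lambda>i. \<sigma> (Suc i)))"
  by (rule pr_expr_reindex) auto

lemma pr_expr_shift2:
  "pr_expr n f \<Longrightarrow> pr_expr (Suc (Suc n)) (\<lambda>\<sigma>. f (\<lambda>i. \<sigma> (Suc (Suc i))))"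
  by (rule pr_expr_reindex) auto

lemma pr_expr_Suc: "pr_expr n f \<Longrightarrow> pr_expr n (\<lambda>\<sigma>. Suc (f \<sigma>))"
  using pr_expr_comp[OF pr_expr_Suc_var, of n "\<lambda>i. f"] by simp

lemma pr_expr_const: "pr_expr n (\<lambda>\<sigma>. c)"
  by (induction c) (auto intro: pr_expr_zero pr_expr_Suc)

lemma pr_expr_rec_var0:
  assumes G: "pr_expr n G" and H: "pr_expr (Suc (Suc n)) H"
  shows "pr_expr (Suc n) (\<lambda>\<sigma>. rec_nat (G (\<lambda>i. \<sigma> (Suc i)))
      (\<lambda>k acc. H (case_nat k (case_nat acc (\<lambda>i. \<sigma> (Suc i))))) (\<sigma> 0))"
proof -
  obtain g where g: "PR n g" "\<And>\<tau>. g (map \<tau> [0..<n]) = G \<tau>"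
    using G unfolding pr_expr_def by blast
  obtain h where h: "PR (Suc (Suc n)) h" "\<And>\<tau>. h (map \<tau> [0..<Suc (Suc n)]) = H \<tau>"
    using H unfolding pr_expr_def by blast
  have "PR (Suc n) (\<lambda>xs. rec_nat (g (tl xs)) (\<lambda>k acc. h (k # acc # tl xs)) (hd xs))"
    using PR_rec[OF g(1)] h(1) by (simp add: numeral_2_eq_2)
  moreover have "rec_nat (g (tl (map \<sigma> [0..<Suc n])))
      (\<lambda>k acc. h (k # acc # tl (map \<sigma> [0..<Suc n]))) (hd (map \<sigma> [0..<Suc n]))
     = rec_nat (G (\<lambda>i. \<sigma> (Suc i))) (\<lambda>k acc. H (case_nat k (case_nat acc (\<lambda>i. \<sigma> (Suc i))))) (\<sigma> 0)"
    for \<sigma>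
  proof -
    have map_\<sigma>: "map \<sigma> [0..<Suc n] = \<sigma> 0 # map (\<lambda>i. \<sigma> (Suc i)) [0..<n]"
      by (rule map_upt_Suc)
    have "h (k # acc # map (\<lambda>i. \<sigma> (Suc i)) [0..<n])
        = H (case_nat k (case_nat acc (\<lambda>i. \<sigma> (Suc i))))" for k acc
      using h(2)[of "case_nat k (case_nat acc (\<lambda>i. \<sigma> (Suc i)))"]
      by (simp add: map_upt_Suc del: upt_Suc)
    then show ?thesis by (simp only: map_\<sigma> list.sel g(2))
  qed
  ultimately show ?thesis unfolding pr_expr_def by (intro exI conjI allI)
qed

lemma pr_expr_rec_nat:
  assumes G: "pr_expr n (\<lambda>\<sigma>. G \<sigma>)"
    and H: "pr_expr (Suc (Suc n)) (\<lambda>\<sigma>. H (\<sigma> 0) (\<sigma> 1) (\<lambda>i. \<sigma> (Suc (Suc i))))"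
    and B: "pr_expr n (\<lambda>\<sigma>. B \<sigma>)"
  shows "pr_expr n (\<lambda>\<sigma>. rec_nat (G \<sigma>) (\<lambda>k acc. H k acc \<sigma>) (B \<sigma>))"
proof -
  let ?R = "\<lambda>\<sigma>. rec_nat (G (\<lambda>i. \<sigma> (Suc i)))
      (\<lambda>k acc. H k acc (\<lambda>i. \<sigma> (Suc i))) (\<sigma> 0)"
  have "pr_expr (Suc n) ?R"
    using pr_expr_rec_var0[OF G H] by simp
  \<comment> \<open>substitute the bound for variable 0\<close>
  then have "pr_expr n (\<lambda>\<sigma>. ?R (\<lambda>i. case_nat B (\<lambda>j \<sigma>. \<sigma> j) i \<sigma>))"
    by (rule pr_expr_comp) (use B in \<open>auto intro: pr_expr_var split: nat.split\<close>)
  then show ?thesis by simp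
qed

lemma pr_expr_add:
  "pr_expr n f \<Longrightarrow> pr_expr n g \<Longrightarrow> pr_expr n (\<lambda>\<sigma>. f \<sigma> + g \<sigma>)"
proof -
  assume f: "pr_expr n f" and g: "pr_expr n g"
  have "pr_expr n (\<lambda>\<sigma>. rec_nat (f \<sigma>) (\<lambda>k acc. Suc acc) (g \<sigma>))"
    by (rule pr_expr_rec_nat[OF f _ g]) (auto intro: pr_expr_Suc pr_expr_var)
  moreover have "rec_nat a (\<lambda>k acc. Suc acc) b = a + b" for a b :: nat
    by (induction b) auto
  ultimately show ?thesis by (simp add: add.commute)
qed

lemma pr_expr_pred: "pr_expr n f \<Longrightarrow> pr_expr n (\<lambda>\<sigma>. f \<sigma> - 1)"
proof -
  assume f: "pr_expr n f"
  have "pr_expr n (\<lambda>\<sigma>. rec_nat 0 (\<lambda>k acc. k) (f \<sigma>))"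
    by (rule pr_expr_rec_nat[OF pr_expr_const _ f]) (auto intro: pr_expr_var)
  moreover have "rec_nat 0 (\<lambda>k acc. k) b = b - 1" for b :: nat
    by (cases b) auto
  ultimately show ?thesis by simp
qed

lemma pr_expr_diff:
  "pr_expr n f \<Longrightarrow> pr_expr n g \<Longrightarrow> pr_expr n (\<lambda>\<sigma>. f \<sigma> - g \<sigma>)"
proof -
  assume f: "pr_expr n f" and g: "pr_expr n g"
  have "pr_expr n (\<lambda>\<sigma>. rec_nat (f \<sigma>) (\<lambda>k acc. acc - 1) (g \<sigma>))"
    by (rule pr_expr_rec_nat[OF f _ g]) (intro pr_expr_pred pr_expr_var, simp)
  moreover have "rec_nat a (\<lambda>k acc. acc - 1) b = a - b" for a b :: nat
    by (induction b) auto
  ultimately show ?thesis by simp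
qed

lemma pr_expr_sum:
  assumes F: "pr_expr (Suc n) (\<lambda>\<sigma>. F (\<sigma> 0) (\<lambda>i. \<sigma> (Suc i)))" and B: "pr_expr n B"
  shows "pr_expr n (\<lambda>\<sigma>. \<Sum>y<B \<sigma>. F y \<sigma>)"
proof -
  have "pr_expr (Suc (Suc n)) (\<lambda>\<sigma>. (\<lambda>\<sigma>. F (\<sigma> 0) (\<lambda>i. \<sigma> (Suc i))) (\<lambda>i. \<sigma> (case_nat 0 (\<lambda>i. Suc (Suc i)) i)))"
    by (rule pr_expr_reindex[OF F]) (auto split: nat.split)
  then have F2: "pr_expr (Suc (Suc n)) (\<lambda>\<sigma>. F (\<sigma> 0) (\<lambda>i. \<sigma> (Suc (Suc i))))"
    by simp
  have "pr_expr n (\<lambda>\<sigma>. rec_nat 0 (\<lambda>k acc. acc + F k \<sigma>) (B \<sigma>))"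
    by (rule pr_expr_rec_nat[OF pr_expr_const _ B]) (auto intro!: pr_expr_add pr_expr_var F2)
  moreover have "rec_nat 0 (\<lambda>k acc. acc + F k s) b = (\<Sum>y<b. F y s)" for b s
    by (induction b) auto
  ultimately show ?thesis by simp
qed

lemma pr_expr_mult:
  "pr_expr n f \<Longrightarrow> pr_expr n g \<Longrightarrow> pr_expr n (\<lambda>\<sigma>. f \<sigma> * g \<sigma>)"
proof -
  assume f: "pr_expr n f" and g: "pr_expr n g"
  have "pr_expr n (\<lambda>\<sigma>. \<Sum>y<g \<sigma>. f \<sigma>)"
    by (rule pr_expr_sum[OF _ g]) (rule pr_expr_shift[OF f])
  then show ?thesis by (simp add: mult.commute)
qed

lemma pr_expr_power:
  "pr_expr n f \<Longrightarrow> pr_expr n g \<Longrightarrow> pr_expr n (\<lambda>\<sigma>. f \<sigma> ^ g \<sigma>)"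
proof -
  assume f: "pr_expr n f" and g: "pr_expr n g"
  have "pr_expr n (\<lambda>\<sigma>. rec_nat 1 (\<lambda>k acc. acc * f \<sigma>) (g \<sigma>))"
    by (rule pr_expr_rec_nat[OF pr_expr_const _ g]) (auto intro!: pr_expr_mult pr_expr_var pr_expr_shift2 f)
  moreover have "rec_nat 1 (\<lambda>k acc. acc * a) b = a ^ b" for a b :: nat
    by (induction b) auto
  ultimately show ?thesis by simp
qed

lemma pr_pred_eq:
  assumes "pr_expr n f" "pr_expr n g"
  shows "pr_pred n (\<lambda>\<sigma>. f \<sigma> = g \<sigma>)"
proof -
  have "pr_expr n (\<lambda>\<sigma>. 1 - ((f \<sigma> - g \<sigma>) + (g \<sigma> - f \<sigma>)))"
    by (intro pr_expr_diff pr_expr_add pr_expr_const assms)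
  then show ?thesis unfolding pr_pred_def by (rule pr_expr_cong) auto
qed

lemma pr_pred_le:
  assumes "pr_expr n f" "pr_expr n g"
  shows "pr_pred n (\<lambda>\<sigma>. f \<sigma> \<le> g \<sigma>)"
proof -
  have "pr_expr n (\<lambda>\<sigma>. 1 - (f \<sigma> - g \<sigma>))"
    by (intro pr_expr_diff pr_expr_const assms)
  then show ?thesis unfolding pr_pred_def by (rule pr_expr_cong) auto
qed

lemma pr_pred_not: assumes "pr_pred n P" shows "pr_pred n (\<lambda>\<sigma>. \<not> P \<sigma>)"
proof -
  have "pr_expr n (\<lambda>\<sigma>. 1 - (if P \<sigma> then 1 else 0))"
    using assms unfolding pr_pred_def by (intro pr_expr_diff pr_expr_const)
  then show ?thesis unfolding pr_pred_def by (rule pr_expr_cong) auto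
qed

lemma pr_pred_conj:
  assumes "pr_pred n P" "pr_pred n Q"
  shows "pr_pred n (\<lambda>\<sigma>. P \<sigma> \<and> Q \<sigma>)"
proof -
  have "pr_expr n (\<lambda>\<sigma>. (if P \<sigma> then 1 else 0) * (if Q \<sigma> then 1 else 0))"
    using assms unfolding pr_pred_def by (intro pr_expr_mult)
  then show ?thesis unfolding pr_pred_def by (rule pr_expr_cong) auto
qed

lemma pr_pred_iff:
  assumes "pr_pred n P" "pr_pred n Q"
  shows "pr_pred n (\<lambda>\<sigma>. P \<sigma> \<longleftrightarrow> Q \<sigma>)"
proof -
  have "pr_pred n (\<lambda>\<sigma>. (if P \<sigma> then 1 else 0) = (if Q \<sigma> then 1 else (0::nat)))"
    by (rule pr_pred_eq[OF assms[unfolded pr_pred_def]])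
  then show ?thesis unfolding pr_pred_def by (rule pr_expr_cong) auto
qed

lemma pr_expr_if: assumes "pr_pred n P" "pr_expr n f" "pr_expr n g"
  shows "pr_expr n (\<lambda>\<sigma>. if P \<sigma> then f \<sigma> else g \<sigma>)"
proof -
  have "pr_expr n (\<lambda>\<sigma>. (if P \<sigma> then 1 else 0) * f \<sigma> + (1 - (if P \<sigma> then 1 else 0)) * g \<sigma>)"
    using assms unfolding pr_pred_def by (intro pr_expr_add pr_expr_mult pr_expr_diff pr_expr_const)
  then show ?thesis by (rule pr_expr_cong) auto
qed

lemma pr_pred_ex_less:
  assumes "pr_pred (Suc n) (\<lambda>\<sigma>. P (\<sigma> 0) (\<lambda>i. \<sigma> (Suc i)))" "pr_expr n B"
  shows "pr_pred n (\<lambda>\<sigma>. \<exists>y<B \<sigma>. P y \<sigma>)"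
proof -
  have "pr_expr n (\<lambda>\<sigma>. 1 - (1 - (\<Sum>y<B \<sigma>. if P y \<sigma> then 1 else 0)))"
    using assms unfolding pr_pred_def by (intro pr_expr_diff pr_expr_const pr_expr_sum)
  moreover have "(1 - (1 - (\<Sum>y<b. if P y s then 1 else (0::nat)))) = (if \<exists>y<b. P y s then 1 else 0)" for b s
  proof (cases "\<exists>y<b. P y s")
    case True
    then obtain y where "y < b" "P y s" by blast
    then have "1 \<le> (\<Sum>y<b. if P y s then 1 else (0::nat))"
      using member_le_sum[of y "{..<b}" "\<lambda>y. if P y s then 1 else (0::nat)"] by auto
    with True show ?thesis by simp
  qed auto
  ultimately show ?thesis unfolding pr_pred_def by simp
qed

lemma pr_pred_all_less:
  assumes "pr_pred (Suc n) (\<lambda>\<sigma>. P (\<sigma> 0) (\<lambda>i. \<sigma> (Suc i)))" "pr_expr n B"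
  shows "pr_pred n (\<lambda>\<sigma>. \<forall>y<B \<sigma>. P y \<sigma>)"
  using pr_pred_not[OF pr_pred_ex_less[OF pr_pred_not[OF assms(1)] assms(2)]] by simp

lemmas pr_basic = pr_expr_const pr_expr_var pr_expr_Suc pr_expr_add pr_expr_diff pr_expr_mult pr_expr_power pr_expr_if
  pr_pred_eq pr_pred_le pr_pred_not pr_pred_conj pr_pred_iff

lemma sum_indicator_less: "(\<Sum>y<a. if y < d then 1 else (0::nat)) = min a d"
  by (induction a) auto

lemma div_as_sum: "0 < b \<Longrightarrow> a div b = (\<Sum>y<a. if Suc y * b \<le> a then 1 else (0::nat))"
proof -
  assume b: "0 < b"
  have "(\<Sum>y<a. if Suc y * b \<le> a then 1 else (0::nat)) = (\<Sum>y<a. if y < a div b then 1 else (0::nat))"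
  proof (intro sum.cong refl)
    fix y
    have "Suc y * b \<le> a \<longleftrightarrow> y < a div b"
      by (metis Suc_le_eq less_eq_div_iff_mult_less_eq b)
    then show "(if Suc y * b \<le> a then 1 else (0::nat)) = (if y < a div b then 1 else 0)" by simp
  qed
  also have "\<dots> = a div b" using b by (simp add: sum_indicator_less min_absorb2)
  finally show ?thesis by simp
qed

lemma pr_expr_div:
  assumes f: "pr_expr n f" and g: "pr_expr n g"
  shows "pr_expr n (\<lambda>\<sigma>. f \<sigma> div g \<sigma>)"
proof -
  have "pr_expr n (\<lambda>\<sigma>. if g \<sigma> = 0 then 0 else (\<Sum>y<f \<sigma>. if Suc y * g \<sigma> \<le> f \<sigma> then 1 else 0))"
    by (intro pr_basic pr_expr_sum f g pr_expr_shift[OF f] pr_expr_shift[OF g]) simp_all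
  then show ?thesis by (rule pr_expr_cong) (simp add: div_as_sum)
qed

section \<open>Primitive recursive coding of pairs and lists\<close>

lemma triangle_sum: "triangle a = (\<Sum>y<Suc a. y)"
  by (induction a) auto

lemma pr_expr_triangle:
  assumes f: "pr_expr n f"
  shows "pr_expr n (\<lambda>\<sigma>. triangle (f \<sigma>))"
proof -
  have "pr_expr n (\<lambda>\<sigma>. \<Sum>y<Suc (f \<sigma>). y)"
    by (intro pr_basic pr_expr_sum f) simp_all
  then show ?thesis by (rule pr_expr_cong) (simp add: triangle_sum)
qed

lemma pr_expr_prod_encode:
  assumes f: "pr_expr n f" and g: "pr_expr n g"
  shows "pr_expr n (\<lambda>\<sigma>. prod_encode (f \<sigma>, g \<sigma>))"
proof -
  have "pr_expr n (\<lambda>\<sigma>. triangle (f \<sigma> + g \<sigma>) + f \<sigma>)"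
    by (intro pr_basic pr_expr_triangle f g)
  then show ?thesis by (rule pr_expr_cong) (simp add: prod_encode_def)
qed

lemma triangle_mono: "a \<le> b \<Longrightarrow> triangle a \<le> triangle b"
  unfolding triangle_def by (intro div_le_mono mult_le_mono) auto

lemma le_triangle: "a \<le> triangle a"
  by (induction a) auto

definition prod_diag :: "nat \<Rightarrow> nat" where
  "prod_diag x = (\<Sum>y<x. if triangle (Suc y) \<le> x then 1 else 0)"

lemma prod_diag_eq: "prod_diag x = fst (prod_decode x) + snd (prod_decode x)"
proof -
  obtain a b where ab: "prod_decode x = (a, b)" by (cases "prod_decode x")
  then have "x = prod_encode (a, b)" using prod_decode_inverse[of x] by simp
  then have x: "x = triangle (a + b) + a" by (simp add: prod_encode_def)
  have iff: "triangle (Suc y) \<le> x \<longleftrightarrow> y < a + b" for y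
  proof
    assume "y < a + b"
    then have "triangle (Suc y) \<le> triangle (a + b)" by (intro triangle_mono) simp
    then show "triangle (Suc y) \<le> x" using x by simp
  next
    assume h: "triangle (Suc y) \<le> x"
    show "y < a + b"
    proof (rule ccontr)
      assume "\<not> y < a + b"
      then have "triangle (Suc (a + b)) \<le> triangle (Suc y)" by (intro triangle_mono) simp
      then show False using h x by simp
    qed
  qed
  have "a + b \<le> x" using x le_triangle[of "a+b"] by simp
  then have "prod_diag x = a + b"
    unfolding prod_diag_def iff by (simp add: sum_indicator_less min_def)
  then show ?thesis using ab by simp
qed

lemma fst_prod_decode_eq: "fst (prod_decode x) = x - triangle (prod_diag x)"
proof -
  obtain a b where ab: "prod_decode x = (a, b)" by (cases "prod_decode x")
  then have "x = prod_encode (a, b)" using prod_decode_inverse[of x] by simp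
  then have x: "x = triangle (a + b) + a" by (simp add: prod_encode_def)
  show ?thesis using ab x prod_diag_eq[of x] by simp
qed

lemma snd_prod_decode_eq: "snd (prod_decode x) = prod_diag x - fst (prod_decode x)"
  using prod_diag_eq[of x] by simp

lemma pr_expr_prod_diag:
  assumes f: "pr_expr n f"
  shows "pr_expr n (\<lambda>\<sigma>. prod_diag (f \<sigma>))"
proof -
  have "pr_expr n (\<lambda>\<sigma>. \<Sum>y<f \<sigma>. if triangle (Suc y) \<le> f \<sigma> then 1 else 0)"
    by (intro pr_basic pr_expr_sum pr_expr_triangle f pr_expr_shift[OF f]) simp_all
  then show ?thesis by (rule pr_expr_cong) (simp add: prod_diag_def)
qed

lemma pr_expr_fst_prod_decode:
  assumes f: "pr_expr n f"
  shows "pr_expr n (\<lambda>\<sigma>. fst (prod_decode (f \<sigma>)))"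
proof -
  have "pr_expr n (\<lambda>\<sigma>. f \<sigma> - triangle (prod_diag (f \<sigma>)))"
    by (intro pr_basic pr_expr_triangle pr_expr_prod_diag f)
  then show ?thesis by (rule pr_expr_cong) (simp add: fst_prod_decode_eq)
qed

lemma pr_expr_snd_prod_decode:
  assumes f: "pr_expr n f"
  shows "pr_expr n (\<lambda>\<sigma>. snd (prod_decode (f \<sigma>)))"
proof -
  have "pr_expr n (\<lambda>\<sigma>. prod_diag (f \<sigma>) - fst (prod_decode (f \<sigma>)))"
    by (intro pr_basic pr_expr_fst_prod_decode pr_expr_prod_diag f)
  then show ?thesis by (rule pr_expr_cong) (simp add: snd_prod_decode_eq[symmetric])
qed

definition list_code_drop :: "nat \<Rightarrow> nat \<Rightarrow> nat" where
  "list_code_drop i c = rec_nat c (\<lambda>k acc. if acc = 0 then 0 else snd (prod_decode (acc - 1))) i"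

lemma list_code_drop_0[simp]: "list_code_drop 0 c = c" by (simp add: list_code_drop_def)

lemma list_code_drop_Suc[simp]:
  "list_code_drop (Suc i) c = (if list_code_drop i c = 0 then 0 else snd (prod_decode (list_code_drop i c - 1)))"
  by (simp add: list_code_drop_def)

lemma list_decode_eq_Nil: "list_decode c = [] \<longleftrightarrow> c = 0"
  by (cases c) (auto split: prod.split)

lemma list_decode_list_code_drop: "list_decode (list_code_drop i c) = drop i (list_decode c)"
proof (induction i)
  case 0 then show ?case by simp
next
  case (Suc i)
  show ?case
  proof (cases "list_code_drop i c")
    case 0
    then show ?thesis using Suc by (simp add: drop_Suc tl_drop[symmetric])
  next
    case (Suc m)
    then have "drop i (list_decode c) = fst (prod_decode m) # list_decode (snd (prod_decode m))"
      using Suc.IH by (simp add: case_prod_beta)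
    then have "drop (Suc i) (list_decode c) = list_decode (snd (prod_decode m))"
      by (simp add: drop_Suc tl_drop[symmetric])
    then show ?thesis using Suc by simp
  qed
qed

lemma length_list_decode_le: "length (list_decode c) \<le> c"
proof (induction c rule: less_induct)
  case (less c)
  show ?case
  proof (cases c)
    case 0 then show ?thesis by simp
  next
    case (Suc m)
    obtain a b where ab: "prod_decode m = (a, b)" by (cases "prod_decode m")
    have "m = prod_encode (a, b)" using ab prod_decode_inverse[of m] by simp
    then have "b \<le> m" using le_prod_encode_2[of b a] by simp
    then have "length (list_decode b) \<le> b" using less Suc by simp
    then show ?thesis using Suc ab \<open>b \<le> m\<close> by simp
  qed
qed

lemma list_code_drop_neq_0_iff:
  "list_code_drop i c \<noteq> 0 \<longleftrightarrow> i < length (list_decode c)"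
proof -
  have "list_code_drop i c \<noteq> 0 \<longleftrightarrow> list_decode (list_code_drop i c) \<noteq> []" by (simp add: list_decode_eq_Nil)
  then show ?thesis by (auto simp add: list_decode_list_code_drop)
qed

definition list_code_length :: "nat \<Rightarrow> nat" where
  "list_code_length c = (\<Sum>i<c. if list_code_drop i c = 0 then 0 else 1)"

lemma list_code_length_eq: "list_code_length c = length (list_decode c)"
proof -
  have "list_code_length c = (\<Sum>i<c. if i < length (list_decode c) then 1 else 0)"
    unfolding list_code_length_def by (intro sum.cong) (auto simp: list_code_drop_neq_0_iff[symmetric])
  then show ?thesis using length_list_decode_le[of c] by (simp add: sum_indicator_less min_def)
qed

definition list_code_nth :: "nat \<Rightarrow> nat \<Rightarrow> nat" where
  "list_code_nth c i = fst (prod_decode (list_code_drop i c - 1))"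

lemma list_code_nth_eq: "i < length (list_decode c) \<Longrightarrow> list_code_nth c i = list_decode c ! i"
proof -
  assume i: "i < length (list_decode c)"
  then obtain m where m: "list_code_drop i c = Suc m" using list_code_drop_neq_0_iff[of i c] by (cases "list_code_drop i c") auto
  have "drop i (list_decode c) = fst (prod_decode m) # list_decode (snd (prod_decode m))"
    using list_decode_list_code_drop[of i c] m by (simp add: case_prod_beta)
  then have "list_decode c ! i = fst (prod_decode m)"
    using i by (metis hd_drop_conv_nth list.sel(1))
  then show ?thesis using m by (simp add: list_code_nth_def)
qed

lemma pr_expr_list_code_drop:
  assumes f: "pr_expr n f" and g: "pr_expr n g"
  shows "pr_expr n (\<lambda>\<sigma>. list_code_drop (f \<sigma>) (g \<sigma>))"
proof -
  have "pr_expr n (\<lambda>\<sigma>. rec_nat (g \<sigma>) (\<lambda>k acc. (\<lambda>k acc \<sigma>. if acc = 0 then 0 else snd (prod_decode (acc - 1))) k acc \<sigma>) (f \<sigma>))"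
    by (rule pr_expr_rec_nat[OF g _ f]) (intro pr_basic pr_expr_snd_prod_decode pr_expr_zero; simp)
  then show ?thesis by (rule pr_expr_cong) (simp add: list_code_drop_def)
qed

lemma pr_expr_list_code_length:
  assumes f: "pr_expr n f"
  shows "pr_expr n (\<lambda>\<sigma>. list_code_length (f \<sigma>))"
proof -
  have "pr_expr n (\<lambda>\<sigma>. \<Sum>i<f \<sigma>. if list_code_drop i (f \<sigma>) = 0 then 0 else 1)"
    by (intro pr_basic pr_expr_sum pr_expr_list_code_drop f pr_expr_shift[OF f]; simp)
  then show ?thesis by (rule pr_expr_cong) (simp add: list_code_length_def)
qed

lemma pr_expr_list_code_nth:
  assumes f: "pr_expr n f" and g: "pr_expr n g"
  shows "pr_expr n (\<lambda>\<sigma>. list_code_nth (f \<sigma>) (g \<sigma>))"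
proof -
  have "pr_expr n (\<lambda>\<sigma>. fst (prod_decode (list_code_drop (g \<sigma>) (f \<sigma>) - 1)))"
    by (intro pr_basic pr_expr_fst_prod_decode pr_expr_list_code_drop f g)
  then show ?thesis by (rule pr_expr_cong) (simp add: list_code_nth_def)
qed

lemma pr_pred_odd: assumes f: "pr_expr n f" shows "pr_pred n (\<lambda>\<sigma>. odd (f \<sigma>))"
proof -
  have "pr_pred n (\<lambda>\<sigma>. \<not> (\<exists>y<Suc (f \<sigma>). f \<sigma> = y + y))"
    by (intro pr_basic pr_pred_ex_less f pr_expr_shift[OF f]; simp)
  moreover have "(\<not> (\<exists>y<Suc a. a = y + y)) \<longleftrightarrow> odd a" for a :: nat
    by presburger
  ultimately show ?thesis by simp
qed

definition unit_word_code :: "nat \<Rightarrow> nat" where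
  "unit_word_code m = rec_nat 3 (\<lambda>k acc. Suc (prod_encode (0, acc))) m"

lemma unit_word_code_eq: "unit_word_code m = list_encode (replicate m 0 @ [1])"
proof (induction m)
  case 0
  have "prod_encode (1, 0) = 2" by (simp add: prod_encode_def)
  then show ?case by (simp add: unit_word_code_def)
next
  case (Suc m)
  then show ?case by (simp add: unit_word_code_def)
qed

lemma pr_expr_unit_word_code:
  assumes f: "pr_expr n f"
  shows "pr_expr n (\<lambda>\<sigma>. unit_word_code (f \<sigma>))"
proof -
  have "pr_expr n (\<lambda>\<sigma>. rec_nat 3 (\<lambda>k acc. (\<lambda>k acc \<sigma>. Suc (prod_encode (0, acc))) k acc \<sigma>) (f \<sigma>))"
    by (rule pr_expr_rec_nat[OF pr_expr_const _ f]) (intro pr_basic pr_expr_prod_encode; simp)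
  then show ?thesis by (rule pr_expr_cong) (simp add: unit_word_code_def)
qed

lemmas pr_intros = pr_basic pr_expr_sum pr_pred_ex_less pr_pred_all_less pr_expr_div
  pr_expr_triangle pr_expr_prod_encode pr_expr_fst_prod_decode pr_expr_snd_prod_decode
  pr_expr_list_code_length pr_expr_list_code_nth pr_pred_odd pr_expr_unit_word_code

section \<open>Computable functions on Baire space\<close>

lemma prim_rec1_if_pr_expr: "pr_expr 1 (\<lambda>\<sigma>. g (\<sigma> 0)) \<Longrightarrow> prim_rec1 g"
  unfolding pr_expr_def prim_rec1_def
proof (elim exE conjE, intro exI conjI allI)
  fix f assume "PR 1 f" "\<forall>\<sigma>. f (map \<sigma> [0..<1]) = g (\<sigma> 0)"
  then show "PR 1 f" "g x = f [x]" for x by (auto dest: spec[of _ "\<lambda>_. x"])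
qed

abbreviation pfst :: "nat \<Rightarrow> nat" where "pfst x \<equiv> fst (prod_decode x)"
abbreviation psnd :: "nat \<Rightarrow> nat" where "psnd x \<equiv> snd (prod_decode x)"

lemma computable_baireI:
  assumes "prim_rec1 g"
    and "\<And>n ps. g (prod_encode (n, list_encode ps))
                  = (if need n \<le> length ps then Suc (V n ps) else 0)"
    and "\<And>p n k. need n \<le> k \<Longrightarrow> V n (map p [0..<k]) = K p n"
  shows "computable_baire (\<lambda>p. Some (K p))"
  unfolding computable_baire_def
proof (intro exI[of _ g] conjI allI impI)
  fix p q n assume "Some (K p) = Some q"
  then show "\<exists>k. g (prod_encode (n, list_encode (map p [0..<k]))) \<noteq> 0"
    and "g (prod_encode (n, list_encode (map p [0..<k]))) \<noteq> 0
         \<Longrightarrow> g (prod_encode (n, list_encode (map p [0..<k]))) = Suc (q n)" for k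
    using assms(2,3) by (auto intro!: exI[of _ "need n"] split: if_splits)
qed (rule assms(1))

definition id_step :: "nat \<Rightarrow> nat" where
  "id_step x = (if Suc (pfst x) \<le> list_code_length (psnd x)
     then Suc (list_code_nth (psnd x) (pfst x)) else 0)"

lemma computable_baire_id: "computable_baire (\<lambda>p. Some p)"
proof -
  have "pr_expr 1 (\<lambda>\<sigma>. id_step (\<sigma> 0))" unfolding id_step_def by (intro pr_intros; simp)
  then have "prim_rec1 id_step" by (rule prim_rec1_if_pr_expr)
  then have "computable_baire (\<lambda>p. Some (\<lambda>n. p n))"
    by (rule computable_baireI[where need = Suc and V = "\<lambda>n ps. ps ! n"])
       (auto simp: id_step_def list_code_length_eq list_code_nth_eq)
  then show ?thesis by simp
qed

lemma sW_le_by_input_map: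
  assumes "computable_baire (\<lambda>p. Some (K p))"
    and "\<And>p x. dX p = Some x \<Longrightarrow> x \<in> pdom f \<Longrightarrow>
           \<exists>u. dU (K p) = Some u \<and> u \<in> pdom g \<and> g u \<subseteq> f x"
  shows "sW_le dX f dY dU g dY"
  unfolding sW_le_def
proof (intro exI conjI allI impI)
  fix G assume G: "realizes dU dY G g"
  show "realizes dX dY (\<lambda>p. Option.bind (Some (K p)) (\<lambda>r. Option.bind (G r) (\<lambda>q. Some q))) f"
    unfolding realizes_def
  proof (intro allI impI)
    fix p x assume "dX p = Some x" "x \<in> pdom f"
    then obtain u where u: "dU (K p) = Some u" "u \<in> pdom g" "g u \<subseteq> f x"
      using assms(2) by blast
    then obtain q y where "G (K p) = Some q" "dY q = Some y" "y \<in> g u"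
      using G unfolding realizes_def by blast
    then show "\<exists>q y. Option.bind (Some (K p)) (\<lambda>r. Option.bind (G r) (\<lambda>q. Some q)) = Some q
        \<and> dY q = Some y \<and> y \<in> f x"
      using u(3) by auto
  qed
qed (fact computable_baire_id assms(1))+

lemma lim_conv_unique: "lim_conv p q1 \<Longrightarrow> lim_conv p q2 \<Longrightarrow> q1 = q2"
proof (rule ext)
  fix j assume "lim_conv p q1" "lim_conv p q2"
  then obtain N1 N2 where "\<forall>i\<ge>N1. p (prod_encode (i, j)) = q1 j" "\<forall>i\<ge>N2. p (prod_encode (i, j)) = q2 j"
    unfolding lim_conv_def by blast
  then show "q1 j = q2 j" by (metis max.cobounded1 max.cobounded2)
qed

lemma delta_lim_eq_Some: "lim_conv p q \<Longrightarrow> delta_lim p = Some q"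
  unfolding delta_lim_def using lim_conv_unique by auto

lemma lim_conv_if_delta_lim: "delta_lim p = Some x \<Longrightarrow> lim_conv p x"
  by (metis delta_lim_eq_Some delta_lim_def option.distinct(1) option.inject)

section \<open>The uniform measure on Cantor space\<close>

definition cylinder :: "nat \<Rightarrow> (nat \<Rightarrow> bool) \<Rightarrow> cantor set" where
  "cylinder L w = {x. \<forall>e<L. x e = w e}"

lemma space_cantor_measure[simp]: "space cantor_measure = UNIV"
  unfolding cantor_measure_def by (simp add: space_PiM)

lemma prob_space_cantor_measure: "prob_space cantor_measure"
  unfolding cantor_measure_def by (intro prob_space_PiM prob_space_measure_pmf)

lemma cylinder_eq_prod_emb:
  "cylinder L w = prod_emb UNIV (\<lambda>_::nat. measure_pmf (bernoulli_pmf (1/2))) {..<L} (Pi\<^sub>E {..<L} (\<lambda>e. {w e}))"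
  unfolding cylinder_def by (rule set_eqI) (simp add: prod_emb_def space_PiM PiE_iff extensional_def Ball_def)

lemma cylinder_sets: "cylinder L w \<in> sets cantor_measure"
  unfolding cylinder_eq_prod_emb cantor_measure_def by (rule sets_PiM_I) auto

lemma emeasure_cylinder: "emeasure cantor_measure (cylinder L w) = ennreal ((1/2)^L)"
proof -
  have "\<And>e. emeasure (measure_pmf (bernoulli_pmf (1/2))) {w e} = ennreal (1/2)"
    by (simp add: emeasure_pmf_single split: bool.split)
  then have "emeasure cantor_measure (cylinder L w) = (\<Prod>e\<in>{..<L}. ennreal (1/2))"
    unfolding cylinder_eq_prod_emb cantor_measure_def
    by (subst emeasure_PiM_emb) (simp_all add: prob_space_measure_pmf)
  then show ?thesis by (simp only: prod_constant card_lessThan ennreal_power[symmetric])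
qed

interpretation CM: prob_space cantor_measure by (rule prob_space_cantor_measure)

lemma measure_cylinder: "measure cantor_measure (cylinder L w) = (1/2)^L"
proof -
  have "ennreal (measure cantor_measure (cylinder L w)) = ennreal ((1/2)^L)"
    using emeasure_cylinder[of L w] CM.emeasure_eq_measure[of "cylinder L w"] by (simp only:)
  then show ?thesis by (subst (asm) ennreal_inj) auto
qed

lemma map_upt_eq_iff: "map x [0..<length w] = w \<longleftrightarrow> (\<forall>e<length w. x e = w ! e)"
proof -
  have "map x [0..<length w] = w \<longleftrightarrow> map x [0..<length w] = map (nth w) [0..<length w]"
    by (simp only: map_nth)
  also have "\<dots> \<longleftrightarrow> (\<forall>e\<in>set [0..<length w]. x e = w ! e)" by (rule map_eq_conv)
  also have "\<dots> \<longleftrightarrow> (\<forall>e<length w. x e = w ! e)" unfolding set_upt Ball_def atLeastLessThan_iff by (meson zero_le)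
  finally show ?thesis .
qed

lemma Bball_Suc: "Bball (Suc m) = cylinder (length (binword m)) (\<lambda>e. binword m ! e)"
  unfolding Bball_def cylinder_def by (simp only: nat.case map_upt_eq_iff)

lemma Bball_sets: "Bball n \<in> sets cantor_measure"
  by (cases n) (simp add: Bball_def, simp only: Bball_Suc cylinder_sets)

lemma Union_Bball_sets: "(\<Union>n::nat. Bball (p n)) \<in> sets cantor_measure"
  using sets.countable_UN[of "\<lambda>n. Bball (p n)" UNIV cantor_measure] Bball_sets by auto

lemma compl_Bball_Union_sets: "UNIV - (\<Union>n::nat. Bball (p n)) \<in> sets cantor_measure"
  using sets.compl_sets[OF Union_Bball_sets] by simp

lemma NEG_eq_measure:
  "A \<in> sets cantor_measure \<Longrightarrow> NEG A = {if measure cantor_measure A = 0 then 1 else 0}"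
  unfolding NEG_def using CM.emeasure_eq_measure[of A] measure_nonneg[of cantor_measure A] by auto

lemma measure_eq_0_if_le_half_powers:
  assumes "\<And>L. measure cantor_measure A \<le> (1/2)^L"
  shows "measure cantor_measure A = 0"
proof (rule ccontr)
  assume "measure cantor_measure A \<noteq> 0"
  then have pos: "measure cantor_measure A > 0" by (metis less_eq_real_def measure_nonneg)
  obtain L where "(1/2::real)^L < measure cantor_measure A"
    using real_arch_pow_inv[OF pos, of "1/2"] by auto
  then show False using assms[of L] by simp
qed

fun prefix_code :: "nat \<Rightarrow> (nat \<Rightarrow> bool) \<Rightarrow> nat" where
  "prefix_code 0 x = 0"
| "prefix_code (Suc i) x = (if x 0 then 1 else 0) + 2 * prefix_code i (\<lambda>e. x (Suc e))"

lemma prefix_code_less: "prefix_code i x < 2 ^ i"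
proof (induction i arbitrary: x)
  case 0 then show ?case by simp
next
  case (Suc i)
  have "prefix_code i (\<lambda>e. x (Suc e)) < 2 ^ i" by (rule Suc.IH)
  then show ?case by simp
qed

lemma bool_plus_double_div_2: "((if b then 1 else 0) + 2 * w) div 2 = (w::nat)"
  by (cases b) auto

lemma bit_prefix_code: "e < i \<Longrightarrow> bit (prefix_code i x) e = x e"
proof (induction i arbitrary: x e)
  case 0 then show ?case by simp
next
  case (Suc i)
  show ?case
  proof (cases e)
    case 0 then show ?thesis by (simp add: bit_0)
  next
    case (Suc e')
    then have "e' < i" using Suc.prems by simp
    then show ?thesis using Suc.IH[of e' "\<lambda>e. x (Suc e)"] \<open>e = Suc e'\<close>
      by (simp only: bit_Suc prefix_code.simps bool_plus_double_div_2)
  qed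
qed

lemma nat_eq_if_bits_below_eq:
  "(v::nat) < 2 ^ i \<Longrightarrow> v' < 2 ^ i \<Longrightarrow> (\<forall>e<i. bit v e = bit v' e) \<Longrightarrow> v = v'"
  by (metis bit_eq_iff bit_take_bit_iff take_bit_nat_eq_self)

lemma mem_cylinder_bit_iff:
  "v < 2 ^ i \<Longrightarrow> x \<in> cylinder i (bit v) \<longleftrightarrow> v = prefix_code i x"
proof
  assume v: "v < 2 ^ i" and "x \<in> cylinder i (bit v)"
  then have "\<forall>e<i. bit v e = bit (prefix_code i x) e" by (auto simp: cylinder_def bit_prefix_code)
  then show "v = prefix_code i x" using nat_eq_if_bits_below_eq[OF v prefix_code_less] by blast
next
  assume "v = prefix_code i x"
  then show "x \<in> cylinder i (bit v)" by (auto simp: cylinder_def bit_prefix_code)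
qed

lemma measure_eq_count_cells:
  assumes S: "\<And>x. x \<in> S \<longleftrightarrow> Q (prefix_code i x)"
  shows "measure cantor_measure S = real (\<Sum>v<2^i. if Q v then 1 else 0) * (1/2)^i"
proof -
  let ?A = "\<lambda>v. if Q v then cylinder i (bit v) else {}"
  have "S = (\<Union>v\<in>{..<2^i}. ?A v)"
  proof (intro set_eqI iffI)
    fix x assume "x \<in> S"
    then have "Q (prefix_code i x)" using S by simp
    then show "x \<in> (\<Union>v\<in>{..<2^i}. ?A v)"
      using mem_cylinder_bit_iff[OF prefix_code_less[of i x], of x] prefix_code_less[of i x] by auto
  next
    fix x assume "x \<in> (\<Union>v\<in>{..<2^i}. ?A v)"
    then obtain v where v: "v < 2^i" "Q v" "x \<in> cylinder i (bit v)" by (auto split: if_splits)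
    then have "v = prefix_code i x" using mem_cylinder_bit_iff by blast
    then show "x \<in> S" using S v by simp
  qed
  moreover have "measure cantor_measure (\<Union>v\<in>{..<2^i}. ?A v) = (\<Sum>v<2^i. measure cantor_measure (?A v))"
  proof (rule measure_finite_Union)
    show "?A ` {..<2^i} \<subseteq> sets cantor_measure" using cylinder_sets by auto
    show "disjoint_family_on ?A {..<2^i}"
      unfolding disjoint_family_on_def using mem_cylinder_bit_iff by auto
    show "emeasure cantor_measure (?A v) \<noteq> \<infinity>" for v by (simp add: CM.emeasure_eq_measure)
  qed simp
  moreover have "(\<Sum>v<2^i. measure cantor_measure (?A v)) = (\<Sum>v<2^i. (if Q v then 1 else 0) * (1/2)^i)"
    by (intro sum.cong) (auto simp: measure_cylinder)
  ultimately have "measure cantor_measure S = (\<Sum>v<2^i. (if Q v then 1 else 0) * (1/2::real)^i)" by simp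
  also have "\<dots> = (\<Sum>v<2^i. real (if Q v then 1 else 0)) * (1/2)^i"
    by (auto simp: sum_distrib_right intro!: sum.cong)
  also have "\<dots> = real (\<Sum>v<2^i. if Q v then 1 else 0) * (1/2)^i" by (simp only: of_nat_sum)
  finally show ?thesis .
qed


lemma Bball_iff:
  "x \<in> Bball n \<longleftrightarrow> n \<noteq> 0 \<and> (\<forall>e<length (list_decode (n - 1)). x e = odd (list_decode (n - 1) ! e))"
proof (cases n)
  case 0 then show ?thesis by (simp add: Bball_def)
next
  case (Suc m)
  then show ?thesis by (simp add: Bball_Suc cylinder_def binword_def)
qed

section \<open>LPO' reduces to NEG\<close>

definition lpo_to_neg :: "(nat \<Rightarrow> nat) \<Rightarrow> nat \<Rightarrow> nat" where
  "lpo_to_neg p t = (if psnd (pfst t) \<le> psnd t \<and> p (prod_encode (psnd t, pfst (pfst t))) \<noteq> 0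
     then Suc (unit_word_code (pfst t)) else 0)"

definition first_true_at :: "nat \<Rightarrow> cantor set" where
  "first_true_at m = {x. (\<forall>e<m. \<not> x e) \<and> x m}"

lemma Bball_unit_word_code: "Bball (Suc (unit_word_code m)) = first_true_at m"
proof -
  have "x \<in> Bball (Suc (unit_word_code m))
        \<longleftrightarrow> (\<forall>e<Suc m. x e = odd ((replicate m 0 @ [1::nat]) ! e))" for x
    by (simp add: Bball_iff unit_word_code_eq)
  also have "\<dots> x \<longleftrightarrow> (\<forall>e<Suc m. x e = (e = m))" for x
    by (intro all_cong) (auto simp: nth_append less_Suc_eq)
  also have "\<dots> x \<longleftrightarrow> x \<in> first_true_at m" for x
    unfolding first_true_at_def by (auto simp: less_Suc_eq)
  finally show ?thesis by blast
qed

lemma first_true_at_unique: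
  "x \<in> first_true_at m \<Longrightarrow> x \<in> first_true_at m' \<Longrightarrow> m = m'"
  unfolding first_true_at_def by (cases m m' rule: linorder_cases) auto

lemma measure_first_true_at_pos: "measure cantor_measure (first_true_at m) > 0"
  unfolding Bball_unit_word_code[symmetric] Bball_Suc measure_cylinder by simp

lemma mem_Union_Bball_lpo_to_neg_iff:
  "x \<in> (\<Union>t. Bball (lpo_to_neg p t))
     \<longleftrightarrow> (\<exists>k. (\<exists>i\<ge>psnd k. p (prod_encode (i, pfst k)) \<noteq> 0) \<and> x \<in> first_true_at k)"
proof
  assume "x \<in> (\<Union>t. Bball (lpo_to_neg p t))"
  then obtain t where t: "x \<in> Bball (lpo_to_neg p t)" by blast
  then have "lpo_to_neg p t \<noteq> 0" using Bball_iff by blast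
  then show "\<exists>k. (\<exists>i\<ge>psnd k. p (prod_encode (i, pfst k)) \<noteq> 0) \<and> x \<in> first_true_at k"
    using t unfolding lpo_to_neg_def by (auto simp: Bball_unit_word_code split: if_splits)
next
  assume "\<exists>k. (\<exists>i\<ge>psnd k. p (prod_encode (i, pfst k)) \<noteq> 0) \<and> x \<in> first_true_at k"
  then obtain k i where "psnd k \<le> i" "p (prod_encode (i, pfst k)) \<noteq> 0" "x \<in> first_true_at k"
    by blast
  then have "x \<in> Bball (lpo_to_neg p (prod_encode (k, i)))"
    by (simp add: lpo_to_neg_def Bball_unit_word_code)
  then show "x \<in> (\<Union>t. Bball (lpo_to_neg p t))" by blast
qed

lemma lim_has_zero_iff:
  assumes "lim_conv p x"
  shows "(\<exists>m. x m = 0) \<longleftrightarrow> (\<exists>k. \<forall>i\<ge>psnd k. p (prod_encode (i, pfst k)) = 0)"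
proof
  assume "\<exists>m. x m = 0"
  then obtain m where "x m = 0" by blast
  moreover obtain s where "\<forall>i\<ge>s. p (prod_encode (i, m)) = x m"
    using assms unfolding lim_conv_def by blast
  ultimately have "\<forall>i\<ge>psnd (prod_encode (m, s)). p (prod_encode (i, pfst (prod_encode (m, s)))) = 0"
    by simp
  then show "\<exists>k. \<forall>i\<ge>psnd k. p (prod_encode (i, pfst k)) = 0" by blast
next
  assume "\<exists>k. \<forall>i\<ge>psnd k. p (prod_encode (i, pfst k)) = 0"
  then obtain k where k: "\<forall>i\<ge>psnd k. p (prod_encode (i, pfst k)) = 0" by blast
  obtain N where "\<forall>i\<ge>N. p (prod_encode (i, pfst k)) = x (pfst k)"
    using assms unfolding lim_conv_def by blast
  then have "x (pfst k) = p (prod_encode (max N (psnd k), pfst k))" by simp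
  also have "\<dots> = 0" using k by simp
  finally show "\<exists>m. x m = 0" by blast
qed

lemma measure_compl_lpo_to_neg_pos:
  assumes "\<forall>i\<ge>psnd k. p (prod_encode (i, pfst k)) = 0"
  shows "measure cantor_measure (UNIV - (\<Union>t. Bball (lpo_to_neg p t))) > 0"
proof -
  have "first_true_at k \<subseteq> UNIV - (\<Union>t. Bball (lpo_to_neg p t))"
  proof
    fix y assume y: "y \<in> first_true_at k"
    have "y \<notin> (\<Union>t. Bball (lpo_to_neg p t))"
    proof
      assume "y \<in> (\<Union>t. Bball (lpo_to_neg p t))"
      then obtain k' where k': "\<exists>i\<ge>psnd k'. p (prod_encode (i, pfst k')) \<noteq> 0" "y \<in> first_true_at k'"
        unfolding mem_Union_Bball_lpo_to_neg_iff by blast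
      then have "k' = k" using first_true_at_unique[OF y] by simp
      with k'(1) assms show False by auto
    qed
    then show "y \<in> UNIV - (\<Union>t. Bball (lpo_to_neg p t))" by blast
  qed
  then have "measure cantor_measure (first_true_at k)
      \<le> measure cantor_measure (UNIV - (\<Union>t. Bball (lpo_to_neg p t)))"
    by (rule CM.finite_measure_mono[OF _ compl_Bball_Union_sets])
  with measure_first_true_at_pos[of k] show ?thesis by linarith
qed

lemma measure_compl_lpo_to_neg_zero:
  assumes "\<forall>k. \<exists>i\<ge>psnd k. p (prod_encode (i, pfst k)) \<noteq> 0"
  shows "measure cantor_measure (UNIV - (\<Union>t. Bball (lpo_to_neg p t))) = 0"
proof (rule measure_eq_0_if_le_half_powers)
  fix L
  \<comment> \<open>every sequence with a 1 lies in some removed first_true_at k\<close>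
  have "UNIV - (\<Union>t. Bball (lpo_to_neg p t)) \<subseteq> cylinder L (\<lambda>_. False)"
  proof
    fix y assume y: "y \<in> UNIV - (\<Union>t. Bball (lpo_to_neg p t))"
    show "y \<in> cylinder L (\<lambda>_. False)"
    proof (rule ccontr)
      assume "y \<notin> cylinder L (\<lambda>_. False)"
      then have "\<exists>e. y e" unfolding cylinder_def by auto
      then have "y (LEAST e. y e)" "\<forall>e < (LEAST e. y e). \<not> y e"
        by (auto intro: LeastI_ex dest: not_less_Least)
      then have "y \<in> first_true_at (LEAST e. y e)" unfolding first_true_at_def by blast
      then have "y \<in> (\<Union>t. Bball (lpo_to_neg p t))"
        using assms unfolding mem_Union_Bball_lpo_to_neg_iff by blast
      then show False using y by blast
    qed
  qed
  from CM.finite_measure_mono[OF this cylinder_sets]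
  show "measure cantor_measure (UNIV - (\<Union>t. Bball (lpo_to_neg p t))) \<le> (1/2)^L"
    by (simp only: measure_cylinder)
qed

lemma NEG_lpo_to_neg_eq_LPO:
  assumes "lim_conv p x"
  shows "NEG (UNIV - (\<Union>t. Bball (lpo_to_neg p t))) = LPO x"
proof (cases "\<exists>k. \<forall>i\<ge>psnd k. p (prod_encode (i, pfst k)) = 0")
  case True
  then obtain k where k: "\<forall>i\<ge>psnd k. p (prod_encode (i, pfst k)) = 0" by blast
  have "NEG (UNIV - (\<Union>t. Bball (lpo_to_neg p t))) = {0}"
    using measure_compl_lpo_to_neg_pos[OF k]
    by (simp add: NEG_eq_measure[OF compl_Bball_Union_sets])
  moreover have "LPO x = {0}" using True lim_has_zero_iff[OF assms] by (simp add: LPO_def)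
  ultimately show ?thesis by simp
next
  case False
  then have "NEG (UNIV - (\<Union>t. Bball (lpo_to_neg p t))) = {1}"
    using measure_compl_lpo_to_neg_zero by (simp add: NEG_eq_measure[OF compl_Bball_Union_sets])
  moreover have "LPO x = {1}" using False lim_has_zero_iff[OF assms] by (simp add: LPO_def)
  ultimately show ?thesis by simp
qed

definition lpo_to_neg_step :: "nat \<Rightarrow> nat" where
  "lpo_to_neg_step x =
    (if Suc (prod_encode (psnd (pfst x), pfst (pfst (pfst x)))) \<le> list_code_length (psnd x)
     then Suc (if psnd (pfst (pfst x)) \<le> psnd (pfst x)
                 \<and> list_code_nth (psnd x) (prod_encode (psnd (pfst x), pfst (pfst (pfst x)))) \<noteq> 0
               then Suc (unit_word_code (pfst (pfst x))) else 0)
     else 0)"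

lemma computable_lpo_to_neg: "computable_baire (\<lambda>p. Some (lpo_to_neg p))"
proof -
  have "pr_expr 1 (\<lambda>\<sigma>. lpo_to_neg_step (\<sigma> 0))"
    unfolding lpo_to_neg_step_def by (intro pr_intros; simp)
  then have "prim_rec1 lpo_to_neg_step" by (rule prim_rec1_if_pr_expr)
  then show ?thesis
    by (rule computable_baireI[where need = "\<lambda>t. Suc (prod_encode (psnd t, pfst (pfst t)))"
          and V = "\<lambda>t ps. if psnd (pfst t) \<le> psnd t \<and> ps ! prod_encode (psnd t, pfst (pfst t)) \<noteq> 0
                         then Suc (unit_word_code (pfst t)) else 0"])
       (auto simp: lpo_to_neg_step_def list_code_length_eq list_code_nth_eq lpo_to_neg_def)
qed

lemma LPO_lim_sW_le_NEG: "sW_le delta_lim LPO delta_01 delta_closed NEG delta_01"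
proof (rule sW_le_by_input_map[OF computable_lpo_to_neg])
  fix p x assume "delta_lim p = Some x"
  then have "NEG (UNIV - (\<Union>t. Bball (lpo_to_neg p t))) = LPO x"
    by (intro NEG_lpo_to_neg_eq_LPO lim_conv_if_delta_lim)
  moreover have "UNIV - (\<Union>t. Bball (lpo_to_neg p t)) \<in> pdom NEG"
    by (simp add: pdom_def NEG_def)
  ultimately show "\<exists>A. delta_closed (lpo_to_neg p) = Some A \<and> A \<in> pdom NEG \<and> NEG A \<subseteq> LPO x"
    by (simp add: delta_closed_def)
qed

section \<open>NEG reduces to LPO'\<close>

definition below_one_bits :: "real \<Rightarrow> nat \<Rightarrow> nat" where
  "below_one_bits r j = (if r \<le> 1 - (1/2)^j then 0 else 1)"

lemma LPO_below_one_bits: "LPO (below_one_bits r) = {if r < 1 then 0 else 1}"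
proof -
  have "(\<exists>j. r \<le> 1 - (1/2::real)^j) \<longleftrightarrow> r < 1"
  proof
    assume "\<exists>j. r \<le> 1 - (1/2::real)^j"
    then obtain j where "r \<le> 1 - (1/2::real)^j" by blast
    moreover have "(1/2::real)^j > 0" by simp
    ultimately show "r < 1" by linarith
  next
    assume "r < 1"
    then obtain j where "(1/2::real)^j < 1 - r" using real_arch_pow_inv[of "1 - r" "1/2"] by auto
    then show "\<exists>j. r \<le> 1 - (1/2::real)^j" by (intro exI[of _ j]) simp
  qed
  then show ?thesis unfolding LPO_def below_one_bits_def by (smt (verit) one_neq_zero)
qed

lemma LPO_below_one_bits_eq_NEG:
  assumes "U \<in> sets cantor_measure"
  shows "LPO (below_one_bits (measure cantor_measure U)) = NEG (UNIV - U)"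
proof -
  have compl: "UNIV - U \<in> sets cantor_measure"
    using sets.compl_sets[OF assms] by simp
  have "measure cantor_measure (UNIV - U) = 1 - measure cantor_measure U"
    using CM.prob_compl[OF assms] by simp
  moreover have "measure cantor_measure U \<le> 1" by (rule CM.prob_le_1)
  ultimately have "measure cantor_measure (UNIV - U) = 0 \<longleftrightarrow> \<not> measure cantor_measure U < 1"
    by linarith
  then show ?thesis by (simp add: LPO_below_one_bits NEG_eq_measure[OF compl])
qed

text \<open>A stage only uses balls whose words have length at most i, so that it is a union of
  cylinders of length i.\<close>
definition Bball_stage :: "(nat \<Rightarrow> nat) \<Rightarrow> nat \<Rightarrow> cantor set" where
  "Bball_stage p i = (\<Union>t\<in>{t. t < i \<and> length (list_decode (p t - 1)) \<le> i}. Bball (p t))"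

definition covered :: "nat \<Rightarrow> nat list \<Rightarrow> nat \<Rightarrow> bool" where
  "covered i ps v \<longleftrightarrow> (\<exists>t<i. ps ! t \<noteq> 0 \<and> length (list_decode (ps ! t - 1)) \<le> i \<and>
     (\<forall>e<length (list_decode (ps ! t - 1)). odd (list_decode (ps ! t - 1) ! e) = bit v e))"

definition covered_count :: "nat \<Rightarrow> nat list \<Rightarrow> nat" where
  "covered_count i ps = (\<Sum>v<2^i. if covered i ps v then 1 else 0)"

lemma mem_Bball_stage_iff:
  "x \<in> Bball_stage p i \<longleftrightarrow> covered i (map p [0..<i]) (prefix_code i x)"
proof
  assume "x \<in> Bball_stage p i"
  then obtain t where t: "t < i" "length (list_decode (p t - 1)) \<le> i" "x \<in> Bball (p t)"
    unfolding Bball_stage_def by blast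
  then show "covered i (map p [0..<i]) (prefix_code i x)"
    unfolding covered_def by (auto simp: Bball_iff bit_prefix_code intro!: exI[of _ t])
next
  assume "covered i (map p [0..<i]) (prefix_code i x)"
  then obtain t where t: "t < i" "p t \<noteq> 0" "length (list_decode (p t - 1)) \<le> i"
    "\<forall>e<length (list_decode (p t - 1)). odd (list_decode (p t - 1) ! e) = bit (prefix_code i x) e"
    unfolding covered_def by auto
  then have "x \<in> Bball (p t)" by (auto simp: Bball_iff bit_prefix_code)
  then show "x \<in> Bball_stage p i" unfolding Bball_stage_def using t by blast
qed

lemma measure_Bball_stage:
  "measure cantor_measure (Bball_stage p i) = covered_count i (map p [0..<i]) * (1/2)^i"
  unfolding covered_count_def by (rule measure_eq_count_cells) (rule mem_Bball_stage_iff)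

lemma Bball_stage_sets: "Bball_stage p i \<in> sets cantor_measure"
  unfolding Bball_stage_def by (intro sets.countable_UN) (auto simp: Bball_sets)

lemma Bball_stage_mono: "i \<le> i' \<Longrightarrow> Bball_stage p i \<subseteq> Bball_stage p i'"
  unfolding Bball_stage_def by (rule UN_mono) auto

lemma Union_Bball_stage: "(\<Union>i. Bball_stage p i) = (\<Union>n. Bball (p n))"
proof (intro set_eqI iffI)
  fix x assume "x \<in> (\<Union>n. Bball (p n))"
  then obtain t where "x \<in> Bball (p t)" by blast
  then have "x \<in> Bball_stage p (max (Suc t) (length (list_decode (p t - 1))))"
    unfolding Bball_stage_def by (intro UN_I[of t]) auto
  then show "x \<in> (\<Union>i. Bball_stage p i)" by blast
qed (auto simp: Bball_stage_def)

lemma tendsto_measure_Bball_stage: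
  "(\<lambda>i. measure cantor_measure (Bball_stage p i))
     \<longlonglongrightarrow> measure cantor_measure (\<Union>n. Bball (p n))"
  using CM.finite_Lim_measure_incseq[of "Bball_stage p"] Bball_stage_sets Bball_stage_mono
  unfolding Union_Bball_stage incseq_def by auto

lemma lim_conv_below_one_bits:
  assumes "\<And>i j. q (prod_encode (i, j)) = below_one_bits (u i) j"
    and "incseq u" and "u \<longlonglongrightarrow> r"
  shows "lim_conv q (below_one_bits r)"
  unfolding lim_conv_def
proof
  fix j
  show "\<exists>N. \<forall>i\<ge>N. q (prod_encode (i, j)) = below_one_bits r j"
  proof (cases "r \<le> 1 - (1/2)^j")
    case True
    have "u i \<le> 1 - (1/2)^j" for i using incseq_le[OF assms(2,3), of i] True by linarith
    then show ?thesis using True by (simp add: assms(1) below_one_bits_def)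
  next
    case False
    then have "eventually (\<lambda>i. 1 - (1/2)^j < u i) sequentially"
      by (intro order_tendstoD(1)[OF assms(3)]) simp
    then obtain N where "\<forall>i\<ge>N. 1 - (1/2)^j < u i" unfolding eventually_sequentially by blast
    with False show ?thesis
      by (intro exI[of _ N]) (auto simp: assms(1) below_one_bits_def not_le)
  qed
qed

lemma threshold_iff:
  "c * 2^j \<le> (2^j - 1) * 2^i \<longleftrightarrow> real c * (1/2)^i \<le> 1 - (1/2::real)^j"
proof -
  have "real c * (1/2)^i \<le> 1 - (1/2::real)^j \<longleftrightarrow> real c * 2^j \<le> (2^j - 1) * 2^i"
    by (simp add: field_simps)
  also have "\<dots> \<longleftrightarrow> real (c * 2^j) \<le> real ((2^j - 1) * 2^i)"
    by simp
  finally show ?thesis by (simp only: of_nat_le_iff)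
qed

definition threshold_bit :: "nat \<Rightarrow> nat \<Rightarrow> nat \<Rightarrow> nat" where
  "threshold_bit c i j = (if c * 2^j \<le> (2^j - 1) * 2^i then 0 else 1)"

definition neg_to_lpo :: "(nat \<Rightarrow> nat) \<Rightarrow> nat \<Rightarrow> nat" where
  "neg_to_lpo p n = threshold_bit (covered_count (pfst n) (map p [0..<pfst n])) (pfst n) (psnd n)"

lemma neg_to_lpo_eq:
  "neg_to_lpo p (prod_encode (i, j)) = below_one_bits (measure cantor_measure (Bball_stage p i)) j"
  by (simp only: neg_to_lpo_def threshold_bit_def below_one_bits_def measure_Bball_stage
      prod_encode_inverse fst_conv snd_conv threshold_iff)

lemma lim_conv_neg_to_lpo:
  "lim_conv (neg_to_lpo p) (below_one_bits (measure cantor_measure (\<Union>n. Bball (p n))))"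
proof (rule lim_conv_below_one_bits[OF neg_to_lpo_eq _ tendsto_measure_Bball_stage])
  show "incseq (\<lambda>i. measure cantor_measure (Bball_stage p i))"
    unfolding incseq_def using CM.finite_measure_mono[OF Bball_stage_mono Bball_stage_sets] by blast
qed

definition covered_count_code :: "nat \<Rightarrow> nat \<Rightarrow> nat" where
  "covered_count_code i c = (\<Sum>v<2^i.
     if \<exists>t<i. list_code_nth c t \<noteq> 0 \<and> list_code_length (list_code_nth c t - 1) \<le> i \<and>
          (\<forall>e<list_code_length (list_code_nth c t - 1).
             odd (list_code_nth (list_code_nth c t - 1) e) = odd ((v::nat) div 2 ^ e))
     then 1 else 0)"

lemma covered_count_code_eq:
  "i \<le> length ps \<Longrightarrow> covered_count_code i (list_encode ps) = covered_count i ps"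
  unfolding covered_count_code_def covered_count_def covered_def
  by (intro sum.cong refl) (auto simp: list_code_length_eq list_code_nth_eq bit_iff_odd)

lemma pr_expr_covered_count_code:
  assumes "pr_expr n f" "pr_expr n g"
  shows "pr_expr n (\<lambda>\<sigma>. covered_count_code (f \<sigma>) (g \<sigma>))"
proof (rule pr_expr_comp2[OF _ assms])
  show "pr_expr 2 (\<lambda>\<sigma>. covered_count_code (\<sigma> 0) (\<sigma> 1))"
    unfolding covered_count_code_def by (intro pr_intros; simp)
qed

lemma covered_cong:
  "(\<And>t. t < i \<Longrightarrow> ps ! t = qs ! t) \<Longrightarrow> covered i ps v = covered i qs v"
  unfolding covered_def by (simp cong: conj_cong)

lemma covered_count_prefix:
  "i \<le> k \<Longrightarrow> covered_count i (map p [0..<k]) = covered_count i (map p [0..<i])"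
  unfolding covered_count_def
  by (intro sum.cong refl arg_cong[where f = "\<lambda>b. if b then 1 else 0"] covered_cong) auto

lemma pr_expr_threshold_bit:
  assumes "pr_expr n f" "pr_expr n g" "pr_expr n h"
  shows "pr_expr n (\<lambda>\<sigma>. threshold_bit (f \<sigma>) (g \<sigma>) (h \<sigma>))"
  unfolding threshold_bit_def by (intro pr_intros assms)

definition neg_to_lpo_step :: "nat \<Rightarrow> nat" where
  "neg_to_lpo_step x = (if pfst (pfst x) \<le> list_code_length (psnd x)
     then Suc (threshold_bit (covered_count_code (pfst (pfst x)) (psnd x)) (pfst (pfst x)) (psnd (pfst x)))
     else 0)"

lemma computable_neg_to_lpo: "computable_baire (\<lambda>p. Some (neg_to_lpo p))"
proof -
  have "pr_expr 1 (\<lambda>\<sigma>. neg_to_lpo_step (\<sigma> 0))"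
    unfolding neg_to_lpo_step_def
    by (intro pr_intros pr_expr_covered_count_code pr_expr_threshold_bit; simp)
  then have "prim_rec1 neg_to_lpo_step" by (rule prim_rec1_if_pr_expr)
  then show ?thesis
  proof (rule computable_baireI[where need = pfst
        and V = "\<lambda>n ps. threshold_bit (covered_count (pfst n) ps) (pfst n) (psnd n)"])
    fix n ps
    show "neg_to_lpo_step (prod_encode (n, list_encode ps))
        = (if pfst n \<le> length ps then Suc (threshold_bit (covered_count (pfst n) ps) (pfst n) (psnd n)) else 0)"
      by (cases "pfst n \<le> length ps")
        (simp_all add: neg_to_lpo_step_def list_code_length_eq covered_count_code_eq)
  next
    fix p n k assume "pfst n \<le> k"
    show "threshold_bit (covered_count (pfst n) (map p [0..<k])) (pfst n) (psnd n) = neg_to_lpo p n"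
      unfolding neg_to_lpo_def covered_count_prefix[OF \<open>pfst n \<le> k\<close>] ..
  qed
qed

lemma NEG_sW_le_LPO_lim: "sW_le delta_closed NEG delta_01 delta_lim LPO delta_01"
proof (rule sW_le_by_input_map[OF computable_neg_to_lpo])
  fix p A assume "delta_closed p = Some A"
  then have A: "A = UNIV - (\<Union>n. Bball (p n))" by (simp add: delta_closed_def)
  let ?x = "below_one_bits (measure cantor_measure (\<Union>n. Bball (p n)))"
  have "delta_lim (neg_to_lpo p) = Some ?x"
    by (rule delta_lim_eq_Some[OF lim_conv_neg_to_lpo])
  moreover have "LPO ?x = NEG A"
    unfolding A by (rule LPO_below_one_bits_eq_NEG[OF Union_Bball_sets])
  moreover have "?x \<in> pdom LPO" by (simp add: pdom_def LPO_def)
  ultimately show "\<exists>x. delta_lim (neg_to_lpo p) = Some x \<and> x \<in> pdom LPO \<and> LPO x \<subseteq> NEG A"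
    by blast
qed

theorem lemma7p9:
  shows "sW_eq delta_lim LPO delta_01 delta_closed NEG delta_01"
  unfolding sW_eq_def using LPO_lim_sW_le_NEG NEG_sW_le_LPO_lim by blast

end
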